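(* Let $r,s$ be coprime nonzero integers with $r^2+4s\ne0$, let $\alpha,\beta$ be the roots of $x^2-rx-s=0$ with $|\alpha|\ge|\beta|$, and assume $\alpha/\beta$ is not a root of unity; put $U_n=\frac{\alpha^n-\beta^n}{\alpha-\beta}$, $V_n=\alpha^n+\beta^n$. Let $n$ be a positive integer, let $p<p_1$ be primes and let $t\ge0$, $h\ge1$, $h_1\ge1$ be integers. Let $n_0\in\{p^h,\ p^hp_1^{h_1}\}$ with $n_0>4$, $n_0\notin\{6,12\}$, and $n_0p^t\mid n$. Then: (a) if $n_0=p^h$, $$M_{n_0}(U_n)\ge \log\left|\frac{\alpha^n-\beta^n}{\alpha^{n/p^{t+1}}-\beta^{n/p^{t+1}}}\right|-(t+1)\log p;$$ (b) if $n_0=p^hp_1^{h_1}$, $$M_{n_0}(U_n)\ge \log\left(\left|\frac{\alpha^n-\beta^n}{\alpha^{n/p^{t+1}}-\beta^{n/p^{t+1}}}\right|\cdot\left|\frac{\alpha^{n/(p_1p^{t+1})}-\beta^{n/(p_1p^{t+1})}}{\alpha^{n/p_1}-\beta^{n/p_1}}\right|\right)-(t+1)\log P\!\left(\frac{n_0}{\gcd(n_0,3)}\right);$$ (c) if $n_0=p^h$ with $p>2$, $$M_{n_0}(V_n)\ge \log\left|\frac{\alpha^n+\beta^n}{\alpha^{n/p^{t+1}}+\beta^{n/p^{t+1}}}\right|-(t+1)\log p.$$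
   Context: For a positive integer $n_0$ and a nonzero integer $\ell$, $M_{n_0}(\ell)=\sum \nu_p\log p$, the sum over primes $p\equiv\pm1\pmod{n_0}$ with $p^{\nu_p}\,\|\,\ell$. $P(m)$ denotes the largest prime factor of the integer $m>1$. *)

theory Defs
  imports "HOL-Analysis.Analysis" "HOL-Number_Theory.Number_Theory"
begin

definition Mfun :: "nat \<Rightarrow> int \<Rightarrow> real" where
  "Mfun n0 l = (\<Sum>p\<in>{q \<in> prime_factors l. [q = 1] (mod int n0) \<or> [q = - 1] (mod int n0)}.
                   real (multiplicity p l) * ln (real_of_int p))"

definition Pmax :: "nat \<Rightarrow> nat" where
  "Pmax m = Max (prime_factors m)"

end

theory Submission
  imports Defs
begin

(* Let v_q be the q-adic valuation and z(q) the rank of apparition of the prime q in (U_n), so that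
   q | U_k iff z(q) | k.  One has z(q) = q if q | r^2 + 4s, z(q) in {2, 3} if q = 2, and z(q) divides
   q - 1 or q + 1 otherwise; hence n0 | z(q) forces q = +-1 (mod n0) unless q = n0 is a prime
   dividing r^2 + 4s.  Combined with the lifting-the-exponent law v_q(U_mk) = v_q(U_m) + v_q(k) for
   q | U_m (q odd, or m even), this shows that every prime q that is not +-1 modulo n0 satisfies
   v_q(U_n) - v_q(U_(n/p^(t+1))) <= t + 1, with 0 in place of t + 1 unless q = p.  Expanding
   log |U_n / U_(n/p^(t+1))| as the sum of (v_q(U_n) - v_q(U_(n/p^(t+1)))) log q, the primes that are
   +-1 modulo n0 contribute at most M_n0(U_n), which gives (a).  Part (b) runs the same argument on
   the alternating sum over the indices n, n/p^(t+1), n/p1, n/(p1 p^(t+1)), and (c) follows from the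
   bound of (a) at n and at 2n, since v_q(V_k) = v_q(U_2k) - v_q(U_k). *)

fun lucas_U :: "int \<Rightarrow> int \<Rightarrow> nat \<Rightarrow> int" where
  "lucas_U P Q 0 = 0"
| "lucas_U P Q (Suc 0) = 1"
| "lucas_U P Q (Suc (Suc k)) = P * lucas_U P Q (Suc k) - Q * lucas_U P Q k"

lemma lucas_U_closed_form:
  fixes x y :: complex
  assumes sum: "x + y = of_int P" and prod: "x * y = of_int Q" and "x \<noteq> y"
  shows "of_int (lucas_U P Q k) = (x^k - y^k) / (x - y)"
proof (induction k rule: induct_nat_012)
  case (ge2 k)
  have "of_int (lucas_U P Q (Suc (Suc k))) =
        (x + y) * of_int (lucas_U P Q (Suc k)) - x * y * of_int (lucas_U P Q k)"
    by (simp add: sum prod)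
  also have "\<dots> = ((x + y) * (x^Suc k - y^Suc k) - x * y * (x^k - y^k)) / (x - y)"
    unfolding ge2 by (simp only: times_divide_eq_right diff_divide_distrib[symmetric])
  also have "\<dots> = (x^Suc (Suc k) - y^Suc (Suc k)) / (x - y)"
    by (simp add: algebra_simps)
  finally show ?case .
qed (use \<open>x \<noteq> y\<close> in simp_all)

(* The factor P^2 keeps the expansion 2^k U_(k+1) = sum_j C(k+1, 2j+1) P^(k-2j) D^j free of negative
   powers of P; modulo D^2 only the terms j = 0 and j = 1 survive. *)
lemma lucas_U_mod_disc_sq:
  "(P^2 - 4*Q)^2 dvd
     P^2 * 2^k * lucas_U P Q (k+1) - of_nat (k+1) * P^(k+2) - of_nat ((k+1) choose 3) * P^k * (P^2 - 4*Q)"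
proof (induction k rule: induct_nat_012)
  case (ge2 k)
  define D where "D = P^2 - 4*Q"
  define E where "E j = P^2 * 2^j * lucas_U P Q (j+1)" for j
  define T where "T j = of_nat (j+1) * P^(j+2) + of_nat ((j+1) choose 3) * P^j * D" for j
  have rec: "E (k+2) = 2*P * E (k+1) - (P^2 - D) * E k"
    by (simp add: E_def D_def numeral_2_eq_2 algebra_simps)
  have choose3: "of_nat ((k+3) choose 3) = 2 * of_nat ((k+2) choose 3) - of_nat ((k+1) choose 3) + (of_nat (k+1) :: int)"
    by (simp add: numeral_3_eq_3 numeral_2_eq_2)
  have "2*P * T (k+1) - (P^2 - D) * T k - T (k+2) = D^2 * (of_nat ((k+1) choose 3) * P^k)"
    unfolding T_def choose3 by (simp add: algebra_simps power_add power2_eq_square numeral_3_eq_3 eval_nat_numeral)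
  then have "E (k+2) - T (k+2) = 2*P * (E (k+1) - T (k+1)) - (P^2 - D) * (E k - T k) + D^2 * (of_nat ((k+1) choose 3) * P^k)"
    unfolding rec by (simp add: algebra_simps)
  moreover have "D^2 dvd E k - T k" "D^2 dvd E (k+1) - T (k+1)"
    using ge2 by (simp_all add: E_def T_def D_def algebra_simps)
  ultimately have "D^2 dvd E (k+2) - T (k+2)"
    by simp
  then show ?case
    by (simp add: E_def T_def D_def algebra_simps)
qed (simp_all add: eval_nat_numeral)

lemma prime_int_dvd_two_power: "prime (q::int) \<Longrightarrow> q dvd 2^j \<Longrightarrow> q = 2"
  using prime_dvd_power[of q 2 j] prime_ge_2_int[of q] zdvd_imp_le[of q 2] by simp

lemma prime_not_dvd_of_dvd_disc:
  assumes "prime (q::int)" "q \<noteq> 2" "q dvd P^2 - 4*Q" "\<not> q dvd Q"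
  shows "\<not> q dvd P"
proof
  assume "q dvd P"
  then have "q dvd P^2"
    by (simp add: power2_eq_square)
  then have "q dvd P^2 - (P^2 - 4*Q)"
    using assms(3) by (rule dvd_diff)
  then have "q dvd 2^2 \<or> q dvd Q"
    using assms(1) by (simp add: prime_dvd_mult_iff)
  then show False
    using assms prime_int_dvd_two_power by blast
qed

lemma prime_dvd_lucas_U_iff:
  assumes q: "prime (q::int)" and qD: "q dvd P^2 - 4*Q" and qQ: "\<not> q dvd Q"
  shows "q dvd lucas_U P Q k \<longleftrightarrow> q dvd int k"
proof (cases "q = 2")
  case True
  have "2 dvd (P^2 - 4*Q) + 4*Q"
    using qD True by (intro dvd_add) simp_all
  then have "even P" "odd Q"
    using qQ True by simp_all
  then have "even (lucas_U P Q k) \<longleftrightarrow> even k"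
    by (induction k rule: induct_nat_012) simp_all
  then show ?thesis
    using True by simp
next
  case False
  have nP: "\<not> q dvd P^m" for m :: nat
    using prime_not_dvd_of_dvd_disc[OF q False qD qQ] q prime_dvd_power by blast
  show ?thesis
  proof (cases k)
    case (Suc j)
    let ?D = "P^2 - 4*Q"
    have "q dvd ?D^2"
      using qD by (simp add: power2_eq_square)
    then have "q dvd P^2 * 2^j * lucas_U P Q (j+1) - of_nat (j+1) * P^(j+2) - of_nat ((j+1) choose 3) * P^j * ?D"
      using lucas_U_mod_disc_sq dvd_trans by blast
    then have "q dvd P^2 * 2^j * lucas_U P Q (j+1) - of_nat (j+1) * P^(j+2)"
      using qD by (metis diff_add_cancel dvd_add dvd_mult)
    then have "q dvd P^2 * 2^j * lucas_U P Q (j+1) \<longleftrightarrow> q dvd of_nat (j+1) * P^(j+2)"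
      by (metis dvd_diff dvd_diff_commute diff_diff_eq2 diff_add_cancel dvd_add)
    moreover have "\<not> q dvd 2^j"
      using False q prime_int_dvd_two_power by blast
    ultimately show ?thesis
      using Suc q nP nP[of 1] by (simp add: prime_dvd_mult_iff del: of_nat_Suc)
  qed simp
qed

lemma lucas_U_prime_mod_sq:
  assumes q: "prime (q::int)" and qD: "q dvd P^2 - 4*Q" and big: "q \<ge> 5 \<or> q^2 dvd P^2 - 4*Q"
  shows "q^2 dvd P^2 * 2^(nat q - 1) * lucas_U P Q (nat q) - q * P^(nat q + 1)"
proof -
  define D where "D = P^2 - 4*Q"
  define j where "j = nat q - 1"
  have j: "j + 1 = nat q" "of_nat (j+1) = q"
    using prime_ge_2_int[OF q] by (simp_all add: j_def)
  have cong: "D^2 dvd P^2 * 2^j * lucas_U P Q (j+1) - q * P^(j+2) - of_nat ((j+1) choose 3) * P^j * D"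
    using lucas_U_mod_disc_sq[of P Q j] unfolding D_def j(2) .
  have "q^2 dvd of_nat ((j+1) choose 3) * P^j * D"
  proof (cases "q \<ge> 5")
    case True
    then have "nat q dvd nat q choose 3"
      using q by (intro dvd_choose_prime) (auto simp: prime_int_iff)
    then have "q dvd of_nat ((j+1) choose 3)"
      using j q by (metis int_dvd_int_iff int_nat_eq prime_ge_0_int)
    then have "q * q dvd of_nat ((j+1) choose 3) * D"
      using qD by (simp add: D_def mult_dvd_mono)
    then have "q * q dvd of_nat ((j+1) choose 3) * D * P^j"
      by (rule dvd_mult2)
    then show ?thesis
      by (simp add: power2_eq_square mult_ac)
  next
    case False
    then show ?thesis
      using big by (simp add: D_def)
  qed
  moreover have "q^2 dvd D^2"
    using qD by (simp add: D_def dvd_power_same)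
  ultimately have "q^2 dvd (P^2 * 2^j * lucas_U P Q (j+1) - q * P^(j+2) - of_nat ((j+1) choose 3) * P^j * D)
                          + of_nat ((j+1) choose 3) * P^j * D"
    using cong by (blast intro: dvd_add dvd_trans)
  then show ?thesis
    unfolding j(1)[symmetric] by simp
qed

lemma multiplicity_lucas_U_prime:
  assumes q: "prime (q::int)" and q2: "q \<noteq> 2" and qD: "q dvd P^2 - 4*Q" and qQ: "\<not> q dvd Q"
    and big: "q \<ge> 5 \<or> q^2 dvd P^2 - 4*Q"
  shows "multiplicity q (lucas_U P Q (nat q)) = 1"
proof -
  define E where "E = P^2 * 2^(nat q - 1) * lucas_U P Q (nat q)"
  have main: "q^2 dvd E - q * P^(nat q + 1)"
    unfolding E_def using lucas_U_prime_mod_sq[OF q qD big] .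
  have nP: "\<not> q dvd P^m" for m :: nat
    using prime_not_dvd_of_dvd_disc[OF q q2 qD qQ] q prime_dvd_power by blast
  have "q dvd E - q * P^(nat q + 1)"
    using main by (rule dvd_trans[rotated]) (simp add: power2_eq_square)
  then have "q dvd (E - q * P^(nat q + 1)) + q * P^(nat q + 1)"
    by (intro dvd_add) simp_all
  then have "q dvd E"
    by simp
  moreover have "\<not> q dvd P^2 * 2^(nat q - 1)"
    using q q2 nP[of 2] prime_int_dvd_two_power prime_dvd_mult_iff by blast
  ultimately have "q dvd lucas_U P Q (nat q)"
    using q prime_dvd_mult_iff by (metis E_def)
  moreover have "\<not> q^2 dvd lucas_U P Q (nat q)"
  proof
    assume "q^2 dvd lucas_U P Q (nat q)"
    then have "q^2 dvd E"
      by (simp add: E_def)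
    then have "q^2 dvd E - (E - q * P^(nat q + 1))"
      using main by (rule dvd_diff)
    then have "q^2 dvd q * P^(nat q + 1)"
      by simp
    then show False
      using nP[of "nat q + 1"] q by (simp add: power2_eq_square)
  qed
  ultimately show ?thesis
    by (intro multiplicity_eqI) (simp_all add: power2_eq_square)
qed

definition odd_binomial_sum :: "int \<Rightarrow> int \<Rightarrow> nat \<Rightarrow> int" where
  "odd_binomial_sum P D k = (\<Sum>i\<in>{i\<in>{..k}. odd i}. of_nat (k choose i) * P^(k-i) * D^(i div 2))"

lemma lucas_U_binomial:
  assumes D: "P^2 - 4*Q \<noteq> 0"
  shows "2^(k-1) * lucas_U P Q k = odd_binomial_sum P (P^2 - 4*Q) k"
proof -
  define D where "D = P^2 - 4*Q"
  define d where "d = csqrt (of_int D)"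
  have d2: "d^2 = of_int D"
    by (simp add: d_def)
  have "of_int D \<noteq> (0::complex)"
    using D unfolding D_def of_int_eq_0_iff by simp
  then have "d \<noteq> 0"
    using d2 by auto
  define x where "x = (of_int P + d) / 2"
  define y where "y = (of_int P - d) / 2"
  have "x * y = (of_int P ^ 2 - d^2) / 4"
    by (simp add: x_def y_def field_simps power2_eq_square)
  then have "x * y = of_int Q"
    by (simp add: d2 D_def)
  moreover have "x + y = of_int P" "x - y = d"
    by (simp_all add: x_def y_def field_simps)
  ultimately have closed: "of_int (lucas_U P Q k) = (x^k - y^k) / d"
    using lucas_U_closed_form[of x y P Q k] \<open>d \<noteq> 0\<close> by auto
  have odd_pow: "d^i - (-d)^i = (if odd i then 2 * d * of_int D ^ (i div 2) else 0)" for i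
    using d2 by (cases "odd i") (auto elim!: oddE simp: power_mult power_add)
  have "(2::complex)^k * (x^k - y^k) = (d + of_int P)^k - (-d + of_int P)^k"
    by (simp add: x_def y_def power_divide field_simps)
  also have "\<dots> = (\<Sum>i\<le>k. of_nat (k choose i) * d^i * of_int P^(k-i))
                 - (\<Sum>i\<le>k. of_nat (k choose i) * (-d)^i * of_int P^(k-i))"
    by (simp only: binomial_ring)
  also have "\<dots> = (\<Sum>i\<le>k. of_nat (k choose i) * (d^i - (-d)^i) * of_int P^(k-i))"
    by (simp add: sum_subtractf algebra_simps)
  also have "\<dots> = (\<Sum>i\<le>k. if odd i then 2 * d * (of_nat (k choose i) * of_int P^(k-i) * of_int D ^ (i div 2)) else 0)"
    by (intro sum.cong refl) (simp add: odd_pow)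
  also have "\<dots> = (\<Sum>i\<in>{i\<in>{..k}. odd i}. 2 * d * (of_nat (k choose i) * of_int P^(k-i) * of_int D ^ (i div 2)))"
    by (simp only: sum.inter_filter[OF finite_atMost])
  also have "\<dots> = 2 * d * of_int (odd_binomial_sum P D k)"
    by (simp add: odd_binomial_sum_def sum_distrib_left)
  finally have expansion: "(2::complex)^k * (x^k - y^k) = 2 * d * of_int (odd_binomial_sum P D k)" .
  have "of_int (2^k * lucas_U P Q k) = (2::complex)^k * (x^k - y^k) / d"
    using closed by simp
  also have "\<dots> = of_int (2 * odd_binomial_sum P D k)"
    using \<open>d \<noteq> 0\<close> by (simp only: expansion) simp
  finally have "of_int (2^k * lucas_U P Q k) = (of_int (2 * odd_binomial_sum P D k) :: complex)" .
  then have "2 * (2^(k-1) * lucas_U P Q k) = 2 * odd_binomial_sum P D k"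
    by (cases k) (simp_all only: of_int_eq_iff, simp_all add: odd_binomial_sum_def)
  then show ?thesis
    by (simp add: D_def)
qed

lemma odd_binomial_sum_prime:
  assumes p: "prime p" "p > 2"
  shows "int p dvd odd_binomial_sum P D p - D^((p-1) div 2)"
proof -
  have "odd p"
    using p prime_odd_nat by blast
  then have split: "{i\<in>{..p}. odd i} = insert p {i\<in>{..<p}. odd i}" and half: "p div 2 = (p-1) div 2"
    by (auto elim: oddE)
  have "int p dvd of_nat (p choose i) * P^(p-i) * D^(i div 2)" if "i \<in> {i\<in>{..<p}. odd i}" for i
    using that p by (auto intro!: dvd_mult2 dvd_choose_prime simp: odd_pos simp flip: of_nat_dvd_iff)
  then have "int p dvd (\<Sum>i\<in>{i\<in>{..<p}. odd i}. of_nat (p choose i) * P^(p-i) * D^(i div 2))"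
    by (rule dvd_sum)
  then show ?thesis
    unfolding odd_binomial_sum_def split by (subst sum.insert) (auto simp: half)
qed

lemma odd_binomial_sum_prime_succ:
  assumes p: "prime p" "p > 2"
  shows "int p dvd odd_binomial_sum P D (p+1) - (P^p + P * D^((p-1) div 2))"
proof -
  have "odd p"
    using p prime_odd_nat by blast
  define M where "M = {i\<in>{2..<p}. odd i}"
  have split: "{i\<in>{..p+1}. odd i} = insert 1 (insert p M)"
    using \<open>odd p\<close> p(2) unfolding M_def set_eq_iff
    by (simp only: mem_Collect_eq insert_iff atMost_iff atLeastLessThan_iff) presburger
  have "1 \<notin> insert p M" "p \<notin> M"
    using p(2) by (auto simp: M_def)
  have half: "p div 2 = (p-1) div 2"
    using \<open>odd p\<close> by (auto elim: oddE)
  have "p dvd (p+1) choose i" if i: "i \<in> M" for i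
  proof -
    obtain j where "i = Suc j" "j \<noteq> 0" "j < p"
      using i by (cases i) (auto simp: M_def)
    moreover have "p dvd p choose j" "p dvd p choose i"
      using i p calculation by (auto simp: M_def intro!: dvd_choose_prime)
    ultimately show ?thesis
      by simp
  qed
  then have "int p dvd (\<Sum>i\<in>M. of_nat ((p+1) choose i) * P^(p+1-i) * D^(i div 2))"
    by (auto intro!: dvd_sum dvd_mult2 simp flip: of_nat_dvd_iff)
  moreover have "odd_binomial_sum P D (p+1) =
      of_nat ((p+1) choose 1) * P^(p+1-1) * D^(1 div 2) + (of_nat ((p+1) choose p) * P^(p+1-p) * D^(p div 2)
      + (\<Sum>i\<in>M. of_nat ((p+1) choose i) * P^(p+1-i) * D^(i div 2)))"
    unfolding odd_binomial_sum_def split using \<open>1 \<notin> insert p M\<close> \<open>p \<notin> M\<close>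
    by (simp add: M_def sum.insert)
  ultimately show ?thesis
    by (simp add: half binomial_Suc_n algebra_simps)
qed

lemma fermat_little_int:
  assumes "prime p"
  shows "int p dvd a^p - a"
proof (cases "int p dvd a")
  case True
  moreover have "a dvd a^p"
    using assms prime_gt_0_nat by simp
  ultimately show ?thesis
    by (blast intro: dvd_diff dvd_trans)
next
  case False
  define b where "b = nat (a mod int p)"
  have b: "int b = a mod int p"
    using assms prime_gt_0_nat by (simp add: b_def)
  then have "\<not> int p dvd int b"
    using False by (simp add: dvd_mod_iff)
  then have "\<not> p dvd b"
    by simp
  then have "[b^(p-1) * b = 1 * b] (mod p)"
    using assms by (intro cong_mult fermat_theorem) simp_all
  then have "[b^p = b] (mod p)"
    using assms prime_gt_0_nat by (simp add: power_Suc2[symmetric])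
  then have "[int b ^ p = int b] (mod int p)"
    by (simp flip: cong_int_iff)
  moreover have "[int b = a] (mod int p)"
    by (simp add: b cong_def)
  ultimately have "[a ^ p = a] (mod int p)"
    by (meson cong_pow cong_sym cong_trans)
  then show ?thesis
    by (simp add: cong_iff_dvd_diff)
qed

lemma prime_dvd_power_half_pm_one:
  assumes p: "prime p" "p > 2" and "\<not> int p dvd D"
  shows "int p dvd D^((p-1) div 2) - 1 \<or> int p dvd D^((p-1) div 2) + 1"
proof -
  have "[Legendre D (int p) = D^((p-1) div 2)] (mod int p)"
    using euler_criterion[OF p] .
  moreover have "\<not> [D = 0] (mod int p)"
    using assms(3) by (simp add: cong_0_iff)
  then have "Legendre D (int p) = 1 \<or> Legendre D (int p) = -1"
    unfolding Legendre_def by auto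
  ultimately have "[D^((p-1) div 2) = 1] (mod int p) \<or> [D^((p-1) div 2) = -1] (mod int p)"
    by (auto intro: cong_sym)
  then show ?thesis
    by (simp add: cong_iff_dvd_diff)
qed

lemma prime_dvd_lucas_U_pred_or_succ:
  assumes p: "prime p" "p > 2" and nQ: "\<not> int p dvd Q" and nD: "\<not> int p dvd P^2 - 4*Q"
  shows "int p dvd lucas_U P Q (p-1) \<or> int p dvd lucas_U P Q (p+1)"
proof -
  define D where "D = P^2 - 4*Q"
  define e where "e = D^((p-1) div 2)"
  have "D \<noteq> 0"
    using nD by (auto simp: D_def)
  have c1: "int p dvd 2^(p-1) * lucas_U P Q p - e"
    using lucas_U_binomial[of P Q p] odd_binomial_sum_prime[OF p, of P D] \<open>D \<noteq> 0\<close>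
    by (simp add: D_def e_def)
  have c2: "int p dvd 2^p * lucas_U P Q (p+1) - (P^p + P * e)"
    using lucas_U_binomial[of P Q "p+1"] odd_binomial_sum_prime_succ[OF p, of P D] \<open>D \<noteq> 0\<close>
    by (simp add: D_def e_def)
  have F: "int p dvd P^p - P"
    using fermat_little_int[OF p(1)] .
  have p2: "\<not> int p dvd 2^k" for k
    using p prime_int_dvd_two_power[of "int p" k] by auto
  have "int p dvd e - 1 \<or> int p dvd e + 1"
    using prime_dvd_power_half_pm_one[OF p] nD by (simp add: e_def D_def)
  then show ?thesis
  proof
    assume h: "int p dvd e + 1"
    have "2^p * lucas_U P Q (p+1) = (2^p * lucas_U P Q (p+1) - (P^p + P * e)) + (P^p - P) + P * (e + 1)"
      by (simp add: algebra_simps)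
    also have "int p dvd \<dots>"
      by (intro dvd_add dvd_mult c2 F h)
    finally show ?thesis
      using p2 p by (simp add: prime_dvd_mult_iff)
  next
    assume h: "int p dvd e - 1"
    have "lucas_U P Q (p+1) = P * lucas_U P Q p - Q * lucas_U P Q (p-1)"
      using lucas_U.simps(3)[of P Q "p-1"] p by (simp add: Suc_diff_Suc numeral_2_eq_2)
    then have rec: "Q * lucas_U P Q (p-1) = P * lucas_U P Q p - lucas_U P Q (p+1)"
      by simp
    have two_pow: "(2::int)^p = 2 * 2^(p-1)"
      using p by (cases p) simp_all
    have "2^p * Q * lucas_U P Q (p-1) = 2^p * (P * lucas_U P Q p - lucas_U P Q (p+1))"
      by (simp only: rec[symmetric] mult.assoc)
    also have "\<dots> = 2*P * (2^(p-1) * lucas_U P Q p) - 2^p * lucas_U P Q (p+1)"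
      by (simp only: two_pow right_diff_distrib mult_ac)
    also have "\<dots> = 2*P * (2^(p-1) * lucas_U P Q p - e) + P * (e - 1)
                     - (2^p * lucas_U P Q (p+1) - (P^p + P * e)) - (P^p - P)"
      by (simp add: algebra_simps)
    also have "int p dvd \<dots>"
      by (intro dvd_diff dvd_add dvd_mult c1 c2 h F)
    finally show ?thesis
      using p2 p nQ by (simp add: prime_dvd_mult_iff)
  qed
qed

lemma dvd_div_prime_power_of_not_dvd:
  fixes p h t n z :: nat
  assumes p: "prime p" and "h \<ge> 1" and "p^(h+t) dvd n" "n > 0" and "z dvd n" "\<not> p^h dvd z"
  shows "z dvd n div p^(t+1)"
proof -
  define m where "m = n div p^(t+1)"
  have "p^(t+1) dvd n"
    using \<open>h \<ge> 1\<close> by (intro dvd_trans[OF le_imp_power_dvd \<open>p^(h+t) dvd n\<close>]) simp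
  then have n: "n = m * p^(t+1)"
    by (simp add: m_def)
  then have "m \<noteq> 0"
    using \<open>n > 0\<close> by auto
  have "z \<noteq> 0"
    using \<open>n > 0\<close> \<open>z dvd n\<close> by auto
  have "multiplicity l z \<le> multiplicity l m" if l: "prime l" for l
  proof -
    have split: "multiplicity l n = multiplicity l m + multiplicity l (p^(t+1))"
      unfolding n using l \<open>m \<noteq> 0\<close> p by (intro prime_elem_multiplicity_mult_distrib) auto
    have "multiplicity l z \<le> multiplicity l n"
      using \<open>z dvd n\<close> \<open>n > 0\<close> by (intro dvd_imp_multiplicity_le) auto
    show ?thesis
    proof (cases "l = p")
      case True
      have "multiplicity p (p^(t+1)) = t + 1"
        by (rule multiplicity_prime_power) (rule prime_imp_prime_elem[OF p])
      moreover have "h + t \<le> multiplicity p n"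
        using \<open>p^(h+t) dvd n\<close> \<open>n > 0\<close> p by (intro multiplicity_geI) auto
      moreover have "multiplicity p z < h"
        using \<open>\<not> p^h dvd z\<close> multiplicity_dvd'[of h p z] by (meson not_less)
      ultimately show ?thesis
        using True split by simp
    next
      case False
      then have "\<not> l dvd p^(t+1)"
        using l p prime_dvd_power primes_dvd_imp_eq by blast
      then show ?thesis
        using split \<open>multiplicity l z \<le> multiplicity l n\<close> by (simp add: not_dvd_imp_multiplicity_0)
    qed
  qed
  then show ?thesis
    using \<open>z \<noteq> 0\<close> by (simp add: m_def multiplicity_le_imp_dvd)
qed

lemma even_div_two_power:
  fixes n :: nat
  assumes "4 < (2::nat)^h" and "2^(h+t) dvd n"
  shows "even (n div 2^(t+1))"
proof -
  have "h \<ge> 2"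
  proof (rule ccontr)
    assume "\<not> h \<ge> 2"
    then have "(2::nat)^h \<le> 2^1"
      by (intro power_increasing) simp_all
    then show False
      using assms(1) by simp
  qed
  then have "2^(t+2) dvd n"
    using \<open>h \<ge> 2\<close> by (intro dvd_trans[OF le_imp_power_dvd assms(2)]) simp
  then obtain k where "n = 2^(t+1) * (2 * k)"
    by (auto simp: power_add mult_ac elim!: dvdE)
  then show ?thesis
    by simp
qed

lemma prime_succ_prime_eq_two:
  fixes p :: nat
  assumes "prime p" "prime (p + 1)"
  shows "p = 2"
  using assms prime_odd_nat[of p] prime_odd_nat[of "p+1"] prime_ge_2_nat[of p] by fastforce

lemma dvd_of_two_prime_powers_dvd:
  fixes p p1 :: nat
  assumes p: "prime p" "prime p1" "p \<noteq> p1" and "h \<ge> 1" "h1 \<ge> 1" and nd: "p^h * p1^h1 * p^t dvd n"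
  shows "p^(h+t) dvd n" "p1^h1 dvd n" "p1 * p^(t+1) dvd n"
proof -
  have "p^h * p1^h1 * p^t = p^(h+t) * p1^h1" "p^h * p1^h1 * p^t = p1^h1 * p^(h+t)"
    by (simp_all add: power_add mult_ac)
  then show pn: "p^(h+t) dvd n" and p1n: "p1^h1 dvd n"
    using nd by (metis dvd_triv_left dvd_trans)+
  have "p^(t+1) dvd n"
    using \<open>h \<ge> 1\<close> by (intro dvd_trans[OF le_imp_power_dvd pn]) simp
  moreover have "p1 dvd p1^h1"
    using \<open>h1 \<ge> 1\<close> by (simp add: dvd_power)
  then have "p1 dvd n"
    using p1n by (rule dvd_trans)
  moreover have "coprime p1 (p^(t+1))"
    using primes_coprime[of p1 p] p by (simp add: coprime_power_right_iff)
  ultimately show "p1 * p^(t+1) dvd n"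
    by (simp add: divides_mult)
qed

abbreviation cong_pm_one :: "nat \<Rightarrow> int \<Rightarrow> bool" where
  "cong_pm_one n q \<equiv> [q = 1] (mod int n) \<or> [q = - 1] (mod int n)"

lemma cong_pm_one_of_dvd:
  assumes "n dvd nat q - 1 \<or> n dvd nat q + 1" and "q \<ge> 1"
  shows "cong_pm_one n q"
proof -
  have "int n dvd int (nat q - 1) \<or> int n dvd int (nat q + 1)"
    using assms(1) by (simp only: of_nat_dvd_iff)
  moreover have "int (nat q - 1) = q - 1" "int (nat q + 1) = q + 1"
    using assms(2) by simp_all
  ultimately have "int n dvd q - 1 \<or> int n dvd q + 1"
    by (simp add: ac_simps)
  then show ?thesis
    by (auto simp: cong_iff_dvd_diff)
qed

lemma ln_abs_eq_sum_multiplicity: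
  fixes x :: int
  assumes x: "x \<noteq> 0" and S: "finite S" "prime_factors x \<subseteq> S" "\<forall>q\<in>S. prime q"
  shows "ln \<bar>real_of_int x\<bar> = (\<Sum>q\<in>S. real (multiplicity q x) * ln (real_of_int q))"
proof -
  have "\<bar>real_of_int x\<bar> = (\<Prod>q\<in>prime_factors x. real_of_int q ^ multiplicity q x)"
    using arg_cong[OF prod_prime_factors[OF x], of real_of_int] by (simp add: of_int_abs)
  then have "ln \<bar>real_of_int x\<bar> = (\<Sum>q\<in>prime_factors x. real (multiplicity q x) * ln (real_of_int q))"
    by (simp add: ln_prod ln_realpow in_prime_factors_iff prime_gt_0_int)
  also have "\<dots> = (\<Sum>q\<in>S. real (multiplicity q x) * ln (real_of_int q))"
    using S x by (intro sum.mono_neutral_left) (auto simp: in_prime_factors_iff not_dvd_imp_multiplicity_0)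
  finally show ?thesis .
qed

lemma Mfun_eq_sum:
  assumes "w \<noteq> 0" "finite S" "prime_factors w \<subseteq> S" "\<forall>q\<in>S. prime q"
  shows "Mfun n0 w = (\<Sum>q\<in>S. (if cong_pm_one n0 q then real (multiplicity q w) else 0) * ln (real_of_int q))"
  unfolding Mfun_def
proof (rule sum.mono_neutral_cong_left[OF assms(2)])
  show "{q \<in> prime_factors w. cong_pm_one n0 q} \<subseteq> S"
    using assms(3) by auto
  show "\<forall>q\<in>S - {q \<in> prime_factors w. cong_pm_one n0 q}.
          (if cong_pm_one n0 q then real (multiplicity q w) else 0) * ln (real_of_int q) = 0"
  proof
    fix q assume "q \<in> S - {q \<in> prime_factors w. cong_pm_one n0 q}"
    then have "\<not> cong_pm_one n0 q \<or> \<not> q dvd w"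
      using assms(1,4) by (auto simp: in_prime_factors_iff)
    then show "(if cong_pm_one n0 q then real (multiplicity q w) else 0) * ln (real_of_int q) = 0"
      by (auto simp: not_dvd_imp_multiplicity_0)
  qed
qed simp

lemma ln_ratio_le_Mfun:
  fixes x y w :: int and P c :: nat
  assumes "x \<noteq> 0" "y \<noteq> 0" "w \<noteq> 0" "P > 0"
    and good: "\<And>q. prime q \<Longrightarrow> cong_pm_one n0 q \<Longrightarrow>
                 int (multiplicity q x) - int (multiplicity q y) \<le> int (multiplicity q w)"
    and bad: "\<And>q. prime q \<Longrightarrow> \<not> cong_pm_one n0 q \<Longrightarrow>
                 int (multiplicity q x) - int (multiplicity q y) \<le> (if q = int P then int c else 0)"
  shows "ln \<bar>real_of_int x\<bar> - ln \<bar>real_of_int y\<bar> \<le> Mfun n0 w + real c * ln (real P)"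
proof -
  define S where "S = prime_factors x \<union> prime_factors y \<union> prime_factors w"
  define l where "l q = ln (real_of_int q)" for q
  define f where "f q = real_of_int (int (multiplicity q x) - int (multiplicity q y))" for q
  define g where "g q = (if cong_pm_one n0 q then real (multiplicity q w) else 0)" for q
  define e where "e q = (if q = int P then real c else 0)" for q
  have S: "finite S" "\<forall>q\<in>S. prime q"
    by (auto simp: S_def in_prime_factors_iff)
  have "prime_factors x \<subseteq> S" "prime_factors y \<subseteq> S"
    by (auto simp: S_def)
  then have "ln \<bar>real_of_int x\<bar> - ln \<bar>real_of_int y\<bar> = (\<Sum>q\<in>S. f q * l q)"
    using ln_abs_eq_sum_multiplicity[OF \<open>x \<noteq> 0\<close> S(1) _ S(2)] ln_abs_eq_sum_multiplicity[OF \<open>y \<noteq> 0\<close> S(1) _ S(2)]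
    by (simp add: f_def l_def sum_subtractf left_diff_distrib)
  also have "\<dots> \<le> (\<Sum>q\<in>S. g q * l q + e q * l q)"
  proof (rule sum_mono)
    fix q assume "q \<in> S"
    then have "l q \<ge> 0" "g q \<ge> 0" "e q \<ge> 0"
      using S(2) prime_ge_1_int by (auto simp: l_def g_def e_def)
    moreover have "f q \<le> g q + e q"
      using good[of q] bad[of q] S(2) \<open>q \<in> S\<close> \<open>g q \<ge> 0\<close> \<open>e q \<ge> 0\<close>
      by (cases "cong_pm_one n0 q") (auto simp: f_def g_def e_def)
    ultimately show "f q * l q \<le> g q * l q + e q * l q"
      by (metis distrib_right mult_right_mono)
  qed
  also have "\<dots> = (\<Sum>q\<in>S. g q * l q) + (\<Sum>q\<in>S. e q * l q)"
    by (rule sum.distrib)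
  also have "(\<Sum>q\<in>S. g q * l q) = Mfun n0 w"
    using Mfun_eq_sum[OF \<open>w \<noteq> 0\<close> S(1) _ S(2)] by (auto simp: g_def l_def S_def)
  also have "(\<Sum>q\<in>S. e q * l q) = (\<Sum>q\<in>S. if q = int P then real c * l q else 0)"
    by (rule sum.cong) (simp_all add: e_def)
  also have "\<dots> = (if int P \<in> S then real c * l (int P) else 0)"
    using S(1) by (rule sum.delta)
  finally have "ln \<bar>real_of_int x\<bar> - ln \<bar>real_of_int y\<bar> \<le> Mfun n0 w + (if int P \<in> S then real c * l (int P) else 0)" .
  moreover have "real c * ln (real P) \<ge> 0"
    using \<open>P > 0\<close> by simp
  ultimately show ?thesis
    by (auto simp: l_def split: if_splits)
qed

lemma prime_dvd_div_gcd_three: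
  fixes p1 m :: nat
  assumes p1: "prime p1" "p1 \<ge> 3" and "p1^h1 dvd m" "h1 \<ge> 1" and "p1 = 3 \<Longrightarrow> h1 \<ge> 2"
  shows "p1 dvd m div gcd m 3"
proof (cases "p1 = 3")
  case True
  then have "3^2 dvd m"
    using assms(3,5) le_imp_power_dvd[of 2 h1 3] dvd_trans by blast
  then have "3 dvd m"
    by (metis dvd_mult_left power2_eq_square)
  then have "gcd m 3 = 3"
    by (simp add: gcd_nat.absorb2)
  then show ?thesis
    using True \<open>3^2 dvd m\<close> by (auto simp: power2_eq_square elim!: dvdE)
next
  case False
  have "p1 dvd m"
    using assms(3,4) dvd_power[of h1 p1] dvd_trans by auto
  moreover have "\<not> p1 dvd gcd m 3"
    using False p1 by (auto dest: dvd_imp_le dvd_trans[OF _ gcd_dvd2])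
  ultimately show ?thesis
    using p1(1) prime_dvd_mult_iff by (metis dvd_div_mult_self gcd_dvd1)
qed

lemma Pmax_two_prime_powers:
  fixes p p1 h h1 :: nat
  assumes p: "prime p" and p1: "prime p1" "p < p1" and "h \<ge> 1" "h1 \<ge> 1"
  shows "Pmax (p^h * p1^h1 div gcd (p^h * p1^h1) 3) = (if p1 = 3 \<and> h1 = 1 then p else p1)"
proof -
  define N where "N = p^h * p1^h1 div gcd (p^h * p1^h1) 3"
  have "N dvd p^h * p1^h1"
    by (simp add: N_def div_dvd_iff_mult gcd_dvd1)
  then have "N > 0"
    using p p1 by (auto simp: prime_gt_0_nat intro: Nat.gr0I)
  have factors: "prime_factors N \<subseteq> {p, p1}"
  proof
    fix y assume "y \<in> prime_factors N"
    then have "prime y" "y dvd p^h * p1^h1"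
      using \<open>N dvd p^h * p1^h1\<close> by (auto simp: in_prime_factors_iff intro: dvd_trans)
    then have "y dvd p \<or> y dvd p1"
      by (auto simp: prime_dvd_mult_iff dest: prime_dvd_power)
    then show "y \<in> {p, p1}"
      using \<open>prime y\<close> p p1 primes_dvd_imp_eq by blast
  qed
  show ?thesis
  proof (cases "p1 = 3 \<and> h1 = 1")
    case True
    then have "p = 2"
      using p p1 prime_ge_2_nat[of p] by simp
    then have "prime_factors N = {2}"
      using True \<open>h \<ge> 1\<close> by (simp add: N_def prime_factors_power prime_prime_factors)
    then show ?thesis
      using True \<open>p = 2\<close> by (simp add: Pmax_def N_def)
  next
    case False
    have "p1 dvd N"
      unfolding N_def using p p1 False \<open>h1 \<ge> 1\<close> prime_ge_2_nat[of p]
      by (intro prime_dvd_div_gcd_three[of p1 h1]) auto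
    then have "Max (prime_factors N) = p1"
      using factors p1 \<open>N > 0\<close> by (intro Max_eqI) (auto simp: in_prime_factors_iff)
    then show ?thesis
      using False by (simp only: Pmax_def N_def if_False)
  qed
qed

locale lucas =
  fixes r s :: int and a b :: complex and U V :: "nat \<Rightarrow> int"
  assumes coprime_rs: "coprime r s" and s_nonzero: "s \<noteq> 0"
    and roots_sum: "a + b = of_int r" and roots_prod: "a * b = - of_int s"
    and not_root_of_unity: "\<forall>k>0. (a / b)^k \<noteq> 1"
    and U_closed: "\<forall>m. of_int (U m) = (a^m - b^m) / (a - b)"
    and V_closed: "\<forall>m. of_int (V m) = a^m + b^m"
begin

lemma roots_nonzero: "a \<noteq> 0" "b \<noteq> 0"
  using roots_prod s_nonzero by auto

lemma roots_pow_neq: "k > 0 \<Longrightarrow> a^k \<noteq> b^k"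
  using not_root_of_unity roots_nonzero by (auto simp: power_divide)

lemma roots_distinct: "a \<noteq> b"
  using roots_pow_neq[of 1] by simp

lemma roots_diff_sq: "(a - b)^2 = of_int (r^2 + 4 * s)"
proof -
  have "(a - b)^2 = (a + b)^2 - 4 * (a * b)"
    by (simp add: power2_eq_square algebra_simps)
  then show ?thesis
    by (simp add: roots_sum roots_prod)
qed

lemma U_eq_lucas_U: "U k = lucas_U r (-s) k"
proof -
  have "of_int (lucas_U r (-s) k) = (a^k - b^k) / (a - b)"
    using lucas_U_closed_form[of a b r "-s"] roots_sum roots_prod roots_distinct by simp
  then show ?thesis
    using U_closed by (metis of_int_eq_iff)
qed

lemma U_0: "U 0 = 0" and U_1: "U 1 = 1"
  by (simp_all add: U_eq_lucas_U)

lemma U_rec: "U (k+2) = r * U (k+1) + s * U k"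
  by (simp add: U_eq_lucas_U numeral_2_eq_2)

lemma U_2: "U 2 = r" and U_3: "U 3 = r^2 + s"
  by (simp_all add: U_eq_lucas_U eval_nat_numeral power2_eq_square)

lemma U_nonzero: "k > 0 \<Longrightarrow> U k \<noteq> 0"
  using U_closed roots_pow_neq roots_distinct by (metis divide_eq_0_iff eq_iff_diff_eq_0 of_int_eq_0_iff)

lemma V_nonzero: "V k \<noteq> 0"
proof
  assume "V k = 0"
  then have "a^k + b^k = 0"
    using V_closed by (metis of_int_0)
  then have "a^k = - (b^k)"
    by (simp add: eq_neg_iff_add_eq_0)
  then have "a^(2*k) = b^(2*k)"
    by (simp add: mult_2 power_add)
  moreover have "k > 0"
    using \<open>a^k = - (b^k)\<close> roots_nonzero by (cases k) auto
  ultimately show False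
    using roots_pow_neq[of "2*k"] by simp
qed

lemma U_double: "U (2*k) = U k * V k"
proof -
  have "a^(2*k) = a^k * a^k" "b^(2*k) = b^k * b^k"
    by (simp_all only: mult_2 power_add)
  then have "a^(2*k) - b^(2*k) = (a^k - b^k) * (a^k + b^k)"
    by (simp add: algebra_simps)
  then have "of_int (U (2*k)) = of_int (U k) * (of_int (V k) :: complex)"
    using U_closed V_closed by simp
  then show ?thesis
    by (metis of_int_eq_iff of_int_mult)
qed

lemma U_mult: "U (m*k) = U m * lucas_U (V m) ((-s)^m) k"
proof (cases "m = 0")
  case False
  have "a^m + b^m = of_int (V m)" "a^m * b^m = of_int ((-s)^m)" "a^m \<noteq> b^m"
    using V_closed roots_prod roots_pow_neq False by (simp_all flip: power_mult_distrib)
  then have "of_int (lucas_U (V m) ((-s)^m) k) = ((a^m)^k - (b^m)^k) / (a^m - b^m)"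
    by (rule lucas_U_closed_form)
  then have "of_int (U (m*k)) = of_int (U m) * (of_int (lucas_U (V m) ((-s)^m) k) :: complex)"
    using U_closed \<open>a^m \<noteq> b^m\<close> roots_distinct by (simp add: power_mult)
  then show ?thesis
    by (metis of_int_eq_iff of_int_mult)
qed (simp add: U_0)

lemma U_dvd_U: "m dvd k \<Longrightarrow> U m dvd U k"
  by (auto simp: U_mult)

lemma disc_V: "(V m)^2 - 4*(-s)^m = (r^2 + 4 * s) * (U m)^2"
proof -
  have "of_int ((V m)^2 - 4*(-s)^m) = (a^m + b^m)^2 - 4*(a*b)^m"
    using V_closed roots_prod by simp
  also have "\<dots> = (a^m - b^m)^2"
    by (simp add: power2_eq_square power_mult_distrib algebra_simps)
  also have "\<dots> = (a - b)^2 * ((a^m - b^m) / (a - b))^2"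
    using roots_distinct by (simp add: power_divide)
  also have "\<dots> = of_int ((r^2 + 4 * s) * (U m)^2)"
    using roots_diff_sq U_closed by simp
  finally show ?thesis
    by (metis of_int_eq_iff)
qed

lemma V_double: "V (2*m) = (V m)^2 - 2*(-s)^m"
proof -
  have "a^(2*m) = a^m * a^m" "b^(2*m) = b^m * b^m" "(a*b)^m = a^m * b^m"
    by (simp_all only: mult_2 power_add power_mult_distrib)
  then have "a^(2*m) + b^(2*m) = (a^m + b^m)^2 - 2*(a*b)^m"
    by (simp add: power2_eq_square algebra_simps)
  then have "of_int (V (2*m)) = (of_int ((V m)^2 - 2*(-s)^m) :: complex)"
    using V_closed roots_prod by simp
  then show ?thesis
    by (simp only: of_int_eq_iff)
qed

lemma U_add: "U (x+1+y) = U (x+1) * U (y+1) + s * U x * U y"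
proof -
  define A where "A i = a^i - b^i" for i
  define z where "z = a - b"
  have "z \<noteq> 0"
    using roots_distinct by (simp add: z_def)
  have div_sq: "(X * Y - w * C * E) / z^2 = (X / z) * (Y / z) - w * (C / z) * (E / z)" for X Y w C E
    using \<open>z \<noteq> 0\<close> by (simp add: field_simps power2_eq_square)
  have "A (x+1+y) / z = (z * A (x+1+y)) / z^2"
    using \<open>z \<noteq> 0\<close> by (simp add: power2_eq_square)
  also have "z * A (x+1+y) = A (x+1) * A (y+1) - (a*b) * A x * A y"
    by (simp add: A_def z_def algebra_simps power_add)
  finally have "A (x+1+y) / z = (A (x+1) / z) * (A (y+1) / z) - (a*b) * (A x / z) * (A y / z)"
    by (simp only: div_sq)
  then have "of_int (U (x+1+y)) = (of_int (U (x+1) * U (y+1) + s * U x * U y) :: complex)"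
    using U_closed roots_prod by (simp add: A_def z_def)
  then show ?thesis
    by (simp only: of_int_eq_iff)
qed

lemma U_succ_cong_pow: "q dvd s \<Longrightarrow> q dvd U (k+1) - r^k"
proof (induction k rule: induct_nat_012)
  case (ge2 k)
  have "U (Suc (Suc k) + 1) - r^Suc (Suc k) = r * (U (Suc k + 1) - r^Suc k) + s * U (Suc k)"
    using U_rec[of "Suc k"] by (simp add: algebra_simps)
  then show ?case
    using ge2 by simp
qed (simp_all add: U_eq_lucas_U)

lemma prime_dvd_U_imp_not_dvd_s:
  assumes q: "prime (q::int)" and "k > 0" "q dvd U k"
  shows "\<not> q dvd s"
proof
  assume "q dvd s"
  then have "q dvd U k - r^(k-1)"
    using U_succ_cong_pow[of q "k-1"] \<open>k > 0\<close> by simp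
  then have "q dvd r^(k-1)"
    using dvd_diff[OF \<open>q dvd U k\<close>] by fastforce
  then have "q dvd r \<and> k > 1"
    using q prime_dvd_power[of q r] \<open>k > 0\<close> by (cases "k = 1") auto
  then show False
    using \<open>q dvd s\<close> coprime_rs q coprime_common_divisor not_prime_unit by blast
qed

lemma prime_not_dvd_consecutive_U:
  assumes q: "prime (q::int)" and "\<not> q dvd s"
  shows "\<not> (q dvd U c \<and> q dvd U (c+1))"
proof (induction c)
  case (Suc c)
  show ?case
  proof
    assume "q dvd U (Suc c) \<and> q dvd U (Suc c + 1)"
    then have "q dvd U (c+2) - r * U (c+1)"
      by simp
    then have "q dvd s * U c"
      using U_rec[of c] by simp
    then show False
      using Suc \<open>q dvd U (Suc c) \<and> q dvd U (Suc c + 1)\<close> q \<open>\<not> q dvd s\<close> by (simp add: prime_dvd_mult_iff)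
  qed
qed (use prime_gt_1_int[OF q] in \<open>simp add: U_eq_lucas_U zdvd1_eq\<close>)

definition rank :: "int \<Rightarrow> nat" where
  "rank q = (LEAST k. 0 < k \<and> q dvd U k)"

lemma rank_pos_dvd:
  assumes "k > 0" "q dvd U k"
  shows "0 < rank q \<and> q dvd U (rank q)"
  unfolding rank_def by (rule LeastI[of _ k]) (use assms in simp)

lemma prime_dvd_U_mod:
  assumes q: "prime (q::int)" and z: "z > 0" "q dvd U z" and qk: "q dvd U k"
  shows "q dvd U (k mod z)"
proof (cases "k div z")
  case 0
  then show ?thesis
    using qk div_mult_mod_eq[of k z] by simp
next
  case (Suc m)
  define x where "x = z * (k div z) - 1"
  have "z * (k div z) = x + 1"
    using Suc z by (simp add: x_def)
  then have "q dvd U (x+1)"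
    using z U_dvd_U[of z "z * (k div z)"] dvd_trans by (metis dvd_triv_left)
  have qs: "\<not> q dvd s"
    using prime_dvd_U_imp_not_dvd_s[OF q z] .
  have "k = x + 1 + k mod z"
    using mult_div_mod_eq[of z k] \<open>z * (k div z) = x + 1\<close> by simp
  then have "U k = U (x+1) * U (k mod z + 1) + s * U x * U (k mod z)"
    using U_add[of x "k mod z"] by simp
  then have "q dvd s * U x * U (k mod z)"
    using qk \<open>q dvd U (x+1)\<close> by (metis dvd_add_right_iff dvd_mult2)
  then have "q dvd U x \<or> q dvd U (k mod z)"
    using q qs by (simp add: prime_dvd_mult_iff)
  then show ?thesis
    using prime_not_dvd_consecutive_U[OF q qs, of x] \<open>q dvd U (x+1)\<close> by blast
qed

lemma prime_dvd_U_iff_rank_dvd: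
  assumes q: "prime (q::int)" and "k0 > 0" "q dvd U k0"
  shows "q dvd U k \<longleftrightarrow> rank q dvd k"
proof
  assume "rank q dvd k"
  then show "q dvd U k"
    using rank_pos_dvd[OF assms(2,3)] U_dvd_U dvd_trans by blast
next
  assume "q dvd U k"
  have z: "0 < rank q" "q dvd U (rank q)"
    using rank_pos_dvd[OF assms(2,3)] by simp_all
  then have "q dvd U (k mod rank q)" "k mod rank q < rank q"
    using prime_dvd_U_mod[OF q z \<open>q dvd U k\<close>] by simp_all
  then have "k mod rank q = 0"
    using not_less_Least[of "k mod rank q" "\<lambda>k. 0 < k \<and> q dvd U k"] by (auto simp: rank_def)
  then show "rank q dvd k"
    by (simp add: dvd_eq_mod_eq_0)
qed

lemma rank_eq_of_dvd_disc:
  assumes q: "prime (q::int)" and "k0 > 0" "q dvd U k0" and qD: "q dvd r^2 + 4 * s"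
  shows "rank q = nat q"
proof -
  have "\<not> q dvd -s"
    using prime_dvd_U_imp_not_dvd_s[OF assms(1-3)] by simp
  then have "q dvd U k \<longleftrightarrow> q dvd int k" for k
    using prime_dvd_lucas_U_iff[OF q, of r "-s"] qD by (simp add: U_eq_lucas_U)
  also have "q dvd int k \<longleftrightarrow> nat q dvd k" for k
    using q prime_ge_0_int by (metis int_nat_eq int_dvd_int_iff)
  finally show ?thesis
    using prime_dvd_U_iff_rank_dvd[OF assms(1-3)] by (metis dvd_antisym dvd_refl)
qed

lemma rank_two:
  assumes "k0 > 0" "2 dvd U k0"
  shows "rank 2 = 2 \<or> rank 2 = 3"
proof -
  have z: "2 dvd U k \<longleftrightarrow> rank 2 dvd k" for k
    using prime_dvd_U_iff_rank_dvd[of 2] assms by simp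
  have "odd s"
    using prime_dvd_U_imp_not_dvd_s[of 2] assms by simp
  then have "2 dvd U 2 \<or> 2 dvd U 3"
    by (simp add: U_2 U_3)
  then have "rank 2 dvd 2 \<or> rank 2 dvd 3"
    by (simp add: z)
  then have "rank 2 \<le> 3"
    by (elim disjE) (auto dest: dvd_imp_le)
  moreover have "rank 2 \<noteq> 1"
    using z[of 1, symmetric] U_1 by simp
  moreover have "rank 2 > 0"
    using rank_pos_dvd[OF assms] by simp
  ultimately show ?thesis
    by presburger
qed

lemma rank_dvd_pred_or_succ:
  assumes q: "prime (q::int)" and "q \<noteq> 2" and "k0 > 0" "q dvd U k0" and qD: "\<not> q dvd r^2 + 4 * s"
  shows "rank q dvd nat q - 1 \<or> rank q dvd nat q + 1"
proof -
  define p where "p = nat q"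
  have qp: "q = int p"
    using q by (simp add: p_def prime_ge_0_int)
  have p: "prime p" "p > 2"
    using q \<open>q \<noteq> 2\<close> prime_ge_2_int[OF q] by (auto simp: qp)
  have "int p dvd lucas_U r (-s) (p-1) \<or> int p dvd lucas_U r (-s) (p+1)"
    using prime_dvd_U_imp_not_dvd_s[OF assms(1,3,4)] qD
    by (intro prime_dvd_lucas_U_pred_or_succ p) (simp_all add: qp)
  then show ?thesis
    using prime_dvd_U_iff_rank_dvd[OF assms(1,3,4)] by (simp add: p_def[symmetric] qp U_eq_lucas_U)
qed

lemma rank_le_succ:
  assumes q: "prime (q::int)" and "k0 > 0" "q dvd U k0"
  shows "rank q \<le> nat q + 1"
proof -
  have "rank q > 0"
    using rank_pos_dvd[OF assms(2,3)] by simp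
  consider "q dvd r^2 + 4 * s" | "q = 2" | "\<not> q dvd r^2 + 4 * s" "q \<noteq> 2"
    by blast
  then show ?thesis
  proof cases
    case 1
    then show ?thesis
      using rank_eq_of_dvd_disc[OF assms] by simp
  next
    case 2
    then have "rank 2 = 2 \<or> rank 2 = 3"
      using rank_two assms(2,3) by simp
    then show ?thesis
      using 2 by auto
  next
    case 3
    then show ?thesis
      using rank_dvd_pred_or_succ[OF q 3(2) assms(2,3) 3(1)] \<open>rank q > 0\<close> prime_gt_1_int[OF q]
      by (auto dest: dvd_imp_le)
  qed
qed

lemma rank_of_bad_prime:
  assumes q: "prime (q::int)" and "k0 > 0" "q dvd U k0"
    and "n0 > 3" "n0 dvd rank q" and bad: "\<not> cong_pm_one n0 q"
  shows "q = int n0 \<and> rank q = n0 \<and> q dvd r^2 + 4 * s"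
proof -
  have "rank q > 0"
    using rank_pos_dvd[OF assms(2,3)] by simp
  then have "n0 \<le> rank q"
    using \<open>n0 dvd rank q\<close> by (simp add: dvd_imp_le)
  have "q \<noteq> 2"
  proof
    assume "q = 2"
    then have "rank 2 = 2 \<or> rank 2 = 3"
      using rank_two assms(2,3) by simp
    then show False
      using \<open>q = 2\<close> \<open>n0 \<le> rank q\<close> \<open>n0 > 3\<close> by auto
  qed
  show ?thesis
  proof (cases "q dvd r^2 + 4 * s")
    case True
    then have "rank q = nat q" "prime (nat q)"
      using rank_eq_of_dvd_disc[OF assms(1-3)] q by simp_all
    then have "n0 = nat q"
      using \<open>n0 dvd rank q\<close> \<open>n0 > 3\<close> by (auto simp: prime_nat_iff)
    then show ?thesis
      using True \<open>rank q = nat q\<close> q prime_ge_0_int by simp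
  next
    case False
    then have "n0 dvd nat q - 1 \<or> n0 dvd nat q + 1"
      using rank_dvd_pred_or_succ[OF q \<open>q \<noteq> 2\<close> assms(2,3)] \<open>n0 dvd rank q\<close> dvd_trans by blast
    then show ?thesis
      using bad cong_pm_one_of_dvd prime_ge_1_int[OF q] by blast
  qed
qed

lemma multiplicity_U_mult_coprime:
  assumes q: "prime (q::int)" and m: "m > 0" "q dvd U m" and k: "k > 0" "\<not> q dvd int k"
  shows "multiplicity q (U (m*k)) = multiplicity q (U m)"
proof -
  define L where "L = lucas_U (V m) ((-s)^m) k"
  have "\<not> q dvd -s"
    using prime_dvd_U_imp_not_dvd_s[OF q m] by simp
  then have "\<not> q dvd (-s)^m"
    using q prime_dvd_power by blast
  moreover have "q dvd (V m)^2 - 4 * (-s)^m"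
    unfolding disc_V using m(2) by (simp add: power2_eq_square)
  ultimately have "\<not> q dvd L"
    using prime_dvd_lucas_U_iff[OF q] k(2) by (simp add: L_def)
  moreover have "U m \<noteq> 0" "L \<noteq> 0"
    using U_nonzero[of "m*k"] m k by (auto simp: U_mult L_def)
  then have "multiplicity q (U m * L) = multiplicity q (U m) + multiplicity q L"
    using q by (intro prime_elem_multiplicity_mult_distrib) auto
  ultimately show ?thesis
    by (simp add: U_mult L_def not_dvd_imp_multiplicity_0)
qed

lemma multiplicity_U_mult_prime:
  assumes q: "prime (q::int)" "q \<noteq> 2" and m: "m > 0" "q dvd U m"
  shows "multiplicity q (U (m * nat q)) = multiplicity q (U m) + 1"
proof -
  define L where "L = lucas_U (V m) ((-s)^m) (nat q)"
  have "\<not> q dvd -s"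
    using prime_dvd_U_imp_not_dvd_s[OF q(1) m] by simp
  then have "\<not> q dvd (-s)^m"
    using q prime_dvd_power by blast
  moreover have "q^2 dvd (V m)^2 - 4 * (-s)^m"
    using m(2) by (simp add: disc_V dvd_power_same)
  moreover from this have "q dvd (V m)^2 - 4 * (-s)^m"
    by (rule dvd_trans[rotated]) (simp add: power2_eq_square)
  ultimately have "multiplicity q L = 1"
    unfolding L_def using q by (intro multiplicity_lucas_U_prime) simp_all
  moreover have "U m \<noteq> 0" "L \<noteq> 0"
    using U_nonzero[of "m * nat q"] m prime_gt_0_int[OF q(1)] by (auto simp: U_mult L_def)
  then have "multiplicity q (U m * L) = multiplicity q (U m) + multiplicity q L"
    using q by (intro prime_elem_multiplicity_mult_distrib) auto
  ultimately show ?thesis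
    by (simp add: U_mult L_def)
qed

lemma multiplicity_U_mult_two:
  assumes m: "m > 0" "even m" "2 dvd U m"
  shows "multiplicity 2 (U (m*2)) = multiplicity 2 (U m) + 1"
proof -
  have "odd s"
    using prime_dvd_U_imp_not_dvd_s[of 2 m] m by simp
  obtain c where c: "m = 2*c"
    using m(2) by blast
  have "even (V c)"
  proof (rule ccontr)
    assume "odd (V c)"
    then have "even (U c)"
      using m(3) by (simp add: c U_double)
    moreover have "(V c)^2 = (r^2 + 4 * s) * (U c)^2 + 4 * (-s)^c"
      using disc_V[of c] by (simp add: algebra_simps)
    ultimately have "even ((V c)^2)"
      by simp
    then show False
      using \<open>odd (V c)\<close> by simp
  qed
  then have "4 dvd (V c)^2"
    by (auto simp: power2_eq_square)
  moreover have "\<not> 2 * 2 dvd 2 * (-s)^c"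
    using \<open>odd s\<close> by (subst dvd_mult_cancel_left) simp
  ultimately have "multiplicity 2 (V m) = 1"
    using \<open>even (V c)\<close> by (intro multiplicity_eqI) (auto simp: c V_double dvd_diff_right_iff)
  then show ?thesis
    using U_nonzero[of m] V_nonzero[of m] m by (simp add: mult.commute[of m] U_double prime_elem_multiplicity_mult_distrib)
qed

lemma multiplicity_U_mult_prime_power:
  assumes p: "prime p" and q: "prime (q::int)" and m: "m > 0" "q dvd U m"
    and parity: "q = int p \<Longrightarrow> odd p \<or> even m"
  shows "multiplicity q (U (m * p^j)) = multiplicity q (U m) + (if q = int p then j else 0)"
proof (cases "q = int p")
  case True
  show ?thesis
  proof (induction j)
    case (Suc j)
    have pos: "m * p^j > 0"
      using m p prime_gt_0_nat by simp
    have dvd: "q dvd U (m * p^j)"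
      using m(2) U_dvd_U[of m "m * p^j"] dvd_trans by auto
    have "multiplicity q (U (m * p^j * p)) = multiplicity q (U (m * p^j)) + 1"
    proof (cases "p = 2")
      case True
      then have "even m"
        using parity \<open>q = int p\<close> by auto
      then show ?thesis
        using multiplicity_U_mult_two[OF pos] dvd True \<open>q = int p\<close> by simp
    next
      case False
      then show ?thesis
        using multiplicity_U_mult_prime[OF q _ pos dvd] \<open>q = int p\<close> by simp
    qed
    then show ?case
      using Suc True by (simp add: mult.assoc mult.commute[of "p^j" p])
  qed simp
next
  case False
  have "\<not> q dvd int (p^j)"
  proof
    assume "q dvd int (p^j)"
    then have "q dvd int p"
      using q prime_dvd_power by (metis of_nat_power)
    then show False
      using False primes_dvd_imp_eq[of q "int p"] q p by simp
  qed
  then show ?thesis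
    using multiplicity_U_mult_coprime[OF q m, of "p^j"] False p prime_gt_0_nat by simp
qed

lemma multiplicity_U_prime:
  assumes q: "prime (q::int)" "q \<ge> 5" and qD: "q dvd r^2 + 4 * s"
  shows "multiplicity q (U (nat q)) = 1"
proof -
  have "\<not> q dvd s"
  proof
    assume "q dvd s"
    then have "q dvd r^2 + 4 * s - 4 * s"
      using qD by (intro dvd_diff) simp_all
    then have "q dvd r^2"
      by simp
    then have "q dvd r"
      using q prime_dvd_power by blast
    then show False
      using \<open>q dvd s\<close> coprime_rs q coprime_common_divisor not_prime_unit by blast
  qed
  then show ?thesis
    using q qD multiplicity_lucas_U_prime[OF q(1), of r "-s"] by (simp add: U_eq_lucas_U)
qed

lemma multiplicity_U_prime_power_mult:
  assumes p: "prime p" "p \<ge> 5" and pD: "int p dvd r^2 + 4 * s" and k: "k > 0" "\<not> p dvd k"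
  shows "multiplicity (int p) (U (p^(j+1) * k)) = j + 1"
proof -
  have "multiplicity (int p) (U p) = 1"
    using multiplicity_U_prime[of "int p"] p pD by simp
  then have "int p dvd U p"
    using multiplicity_dvd'[of 1 "int p" "U p"] by simp
  then have "multiplicity (int p) (U (p * p^j)) = j + 1"
    using multiplicity_U_mult_prime_power[of p "int p" p j] \<open>multiplicity (int p) (U p) = 1\<close> p
      prime_odd_nat by fastforce
  moreover have "int p dvd U (p * p^j)"
    using \<open>int p dvd U p\<close> U_dvd_U dvd_trans by (metis dvd_triv_left)
  ultimately show ?thesis
    using multiplicity_U_mult_coprime[of "int p" "p * p^j" k] p k by simp
qed

lemma multiplicity_U_of_bad_prime_power:
  assumes p: "prime p" and "h \<ge> 1" "p^h > 4" and pn: "p^(h+t) dvd n" and "n > 0"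
    and q: "prime q" and bad: "\<not> cong_pm_one (p^h) q"
    and qn: "q dvd U n" and qm: "\<not> q dvd U (n div p^(t+1))"
  shows "q = int p \<and> multiplicity q (U n) = t + 1"
proof -
  define m where "m = n div p^(t+1)"
  have "p^(t+1) dvd n"
    using \<open>h \<ge> 1\<close> by (intro dvd_trans[OF le_imp_power_dvd pn]) simp
  then have n: "n = p^(t+1) * m"
    by (simp add: m_def)
  then have "m > 0"
    using \<open>n > 0\<close> by (cases m) auto
  note rank_dvd = prime_dvd_U_iff_rank_dvd[OF q \<open>n > 0\<close> qn]
  have "rank q dvd n" "\<not> rank q dvd m"
    using rank_dvd qn qm by (auto simp: m_def)
  then have "p^h dvd rank q"
    using dvd_div_prime_power_of_not_dvd[OF p \<open>h \<ge> 1\<close> pn \<open>n > 0\<close>] unfolding m_def by blast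
  then have "q = int (p^h)" "rank q = p^h" "q dvd r^2 + 4 * s"
    using rank_of_bad_prime[OF q \<open>n > 0\<close> qn _ _ bad] \<open>p^h > 4\<close> by auto
  have "prime (p^h)"
    using q \<open>q = int (p^h)\<close> prime_nat_int_transfer by metis
  then have "h = 1"
    by (simp add: prime_power_iff)
  then have "q = int p" "p \<ge> 5"
    using \<open>q = int (p^h)\<close> \<open>p^h > 4\<close> by simp_all
  moreover have "\<not> p dvd m"
    using \<open>\<not> rank q dvd m\<close> \<open>rank q = p^h\<close> \<open>h = 1\<close> by simp
  ultimately show ?thesis
    using multiplicity_U_prime_power_mult[OF p, of m t] \<open>q dvd r^2 + 4 * s\<close> \<open>m > 0\<close> n by simp
qed

lemma multiplicity_U_div_prime_power_le:
  assumes p: "prime p" and "h \<ge> 1" "p^h > 4" and pn: "p^(h+t) dvd n" and "n > 0"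
    and q: "prime q" and bad: "\<not> cong_pm_one (p^h) q"
  shows "int (multiplicity q (U n)) - int (multiplicity q (U (n div p^(t+1))))
           \<le> (if q = int p then int (t+1) else 0)"
proof -
  define m where "m = n div p^(t+1)"
  have "p^(t+1) dvd n"
    using \<open>h \<ge> 1\<close> by (intro dvd_trans[OF le_imp_power_dvd pn]) simp
  then have n: "n = m * p^(t+1)"
    by (simp add: m_def)
  then have "m > 0"
    using \<open>n > 0\<close> by (cases m) auto
  consider "\<not> q dvd U n" | "q dvd U m" | "q dvd U n" "\<not> q dvd U m"
    by blast
  then show ?thesis
  proof cases
    case 1
    then show ?thesis
      by (simp add: not_dvd_imp_multiplicity_0)
  next
    case 2
    have "odd p \<or> even m"
    proof (cases "p = 2")
      case True
      then show ?thesis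
        using even_div_two_power[of h t n] \<open>p^h > 4\<close> pn by (simp add: m_def)
    next
      case False
      then show ?thesis
        using prime_ge_2_nat[OF p] prime_odd_nat[OF p] by simp
    qed
    then have "multiplicity q (U n) = multiplicity q (U m) + (if q = int p then t + 1 else 0)"
      unfolding n using multiplicity_U_mult_prime_power[OF p q \<open>m > 0\<close> 2] by blast
    then show ?thesis
      by (simp add: m_def)
  next
    case 3
    have "\<not> q dvd U (n div p^(t+1))"
      using 3 by (simp add: m_def)
    then have "q = int p \<and> multiplicity q (U n) = t + 1"
      using multiplicity_U_of_bad_prime_power[OF assms 3(1)] by blast
    then show ?thesis
      using 3 by (auto simp: not_dvd_imp_multiplicity_0)
  qed
qed

lemma multiplicity_U_double:
  assumes "prime (q::int)" "k > 0"
  shows "multiplicity q (U (2*k)) = multiplicity q (U k) + multiplicity q (V k)"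
  unfolding U_double using assms U_nonzero V_nonzero by (intro prime_elem_multiplicity_mult_distrib) auto

lemma multiplicity_V_div_prime_power_le:
  assumes p: "prime p" "odd p" and "h \<ge> 1" "p^h > 4" and pn: "p^(h+t) dvd n" and "n > 0"
    and q: "prime q" and bad: "\<not> cong_pm_one (p^h) q"
  shows "int (multiplicity q (V n)) - int (multiplicity q (V (n div p^(t+1))))
           \<le> (if q = int p then int (t+1) else 0)"
proof -
  define d where "d = p^(t+1)"
  define m where "m = n div d"
  define A where "A N = int (multiplicity q (U N)) - int (multiplicity q (U (N div d)))" for N
  have "d dvd n"
    using \<open>h \<ge> 1\<close> unfolding d_def by (intro dvd_trans[OF le_imp_power_dvd pn]) simp
  then have n: "n = m * d" "2*n = (2*m) * d"
    by (simp_all add: m_def)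
  then have "m > 0"
    using \<open>n > 0\<close> by (cases m) auto
  have "d > 0"
    using p by (simp add: d_def prime_gt_0_nat)
  then have quotients: "n div d = m" "2*n div d = 2*m"
    using n by simp_all
  (* U_2k = U_k V_k turns the claim into a difference of two instances of the bound for U. *)
  have "int (multiplicity q (V n)) - int (multiplicity q (V m)) = A (2*n) - A n"
    using multiplicity_U_double[OF q] \<open>n > 0\<close> \<open>m > 0\<close> by (simp add: A_def quotients)
  also have "\<dots> \<le> (if q = int p then int (t+1) else 0)"
  proof (cases "q dvd U m")
    case True
    then have "q dvd U (2*m)"
      using U_dvd_U dvd_trans by (metis dvd_triv_right)
    have "multiplicity q (U (k * d)) = multiplicity q (U k) + (if q = int p then t + 1 else 0)"
      if "k > 0" "q dvd U k" for k
      unfolding d_def using multiplicity_U_mult_prime_power[OF p(1) q that] p(2) by blast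
    then have "multiplicity q (U (m*d)) = multiplicity q (U m) + (if q = int p then t + 1 else 0)"
      "multiplicity q (U ((2*m)*d)) = multiplicity q (U (2*m)) + (if q = int p then t + 1 else 0)"
      using \<open>m > 0\<close> True \<open>q dvd U (2*m)\<close> by simp_all
    then have "A n = (if q = int p then int (t+1) else 0)" "A (2*n) = (if q = int p then int (t+1) else 0)"
      unfolding A_def quotients using n by (simp_all add: mult.assoc)
    then show ?thesis
      by simp
  next
    case False
    then have "A n \<ge> 0"
      by (simp add: A_def quotients not_dvd_imp_multiplicity_0)
    moreover have "A (2*n) \<le> (if q = int p then int (t+1) else 0)"
      unfolding A_def d_def using multiplicity_U_div_prime_power_le[OF p(1) \<open>h \<ge> 1\<close> \<open>p^h > 4\<close> _ _ q bad] pn \<open>n > 0\<close>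
      by simp
    ultimately show ?thesis
      by simp
  qed
  finally show ?thesis
    unfolding m_def d_def .
qed

lemma dvd_rank_le_succ:
  assumes "prime (q::int)" "k0 > 0" "q dvd U k0" "m dvd rank q"
  shows "m \<le> nat q + 1"
  using rank_le_succ[OF assms(1-3)] rank_pos_dvd[OF assms(2,3)] dvd_imp_le[OF assms(4)] by simp

lemma prime_power_dvd_rank_of_smaller_prime:
  assumes q: "prime (q::int)" "k0 > 0" "q dvd U k0" and p: "prime p" "q = int p"
    and p1: "prime p1" "p < p1" "h1 \<ge> 1" "p1^h1 dvd rank q"
  shows "p = 2 \<and> p1 = 3 \<and> h1 = 1"
proof -
  have "p1 \<le> p1^h1"
    using p1 prime_gt_0_nat by (simp add: self_le_power)
  moreover have "p1^h1 \<le> p + 1"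
    using dvd_rank_le_succ[OF q p1(4)] p(2) by simp
  ultimately have "p1 = p + 1"
    using p1(2) by simp
  then have "p = 2"
    using p(1) p1(1) prime_succ_prime_eq_two by blast
  moreover have "(3::nat)^2 \<le> 3^h1" if "h1 \<ge> 2"
    using that by (intro power_increasing) simp_all
  ultimately show ?thesis
    using \<open>p1 = p + 1\<close> \<open>p1^h1 \<le> p + 1\<close> p1(3) by fastforce
qed

lemma multiplicity_U_mult_odd_prime_le:
  assumes p1: "prime p1" "odd p1" and q: "prime q" and "k > 0" "d > 0" and qkd: "q dvd U (k*d)"
  shows "int (multiplicity q (U (k*p1*d))) - int (multiplicity q (U (k*p1)))
           - int (multiplicity q (U (k*d))) + int (multiplicity q (U k))
         \<le> (if q = int p1 \<and> \<not> q dvd U k then 1 else 0)"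
proof -
  have lift: "multiplicity q (U (l*p1)) = multiplicity q (U l) + (if q = int p1 then 1 else 0)"
    if "l > 0" "q dvd U l" for l
    using multiplicity_U_mult_prime_power[OF p1(1) q that, of 1] p1(2) by simp
  have "multiplicity q (U (k*p1*d)) = multiplicity q (U (k*d)) + (if q = int p1 then 1 else 0)"
    using lift[of "k*d"] \<open>k > 0\<close> \<open>d > 0\<close> qkd by (simp add: mult_ac)
  moreover have "multiplicity q (U k) \<le> multiplicity q (U (k*p1))"
    using U_dvd_U[of k "k*p1"] U_nonzero[of "k*p1"] \<open>k > 0\<close> p1 prime_gt_0_nat
    by (intro dvd_imp_multiplicity_le) auto
  moreover have "multiplicity q (U (k*p1)) = multiplicity q (U k) + (if q = int p1 then 1 else 0)"
    if "q dvd U k"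
    using lift[of k] \<open>k > 0\<close> that by simp
  ultimately show ?thesis
    by (auto simp: not_dvd_imp_multiplicity_0)
qed

lemma cmod_U_ratio:
  assumes "m > 0"
  shows "cmod ((a^n - b^n) / (a^m - b^m)) = \<bar>real_of_int (U n)\<bar> / \<bar>real_of_int (U m)\<bar>"
proof -
  have "a^k - b^k = of_int (U k) * (a - b)" for k
    using U_closed roots_distinct by simp
  then have "(a^n - b^n) / (a^m - b^m) = of_int (U n) / of_int (U m)"
    using roots_distinct by simp
  then show ?thesis
    by (simp add: norm_divide)
qed

lemma cmod_V_ratio: "cmod ((a^n + b^n) / (a^m + b^m)) = \<bar>real_of_int (V n)\<bar> / \<bar>real_of_int (V m)\<bar>"
  using V_closed by (metis norm_divide norm_of_int)

lemma Mfun_U_ge_prime_power: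
  assumes p: "prime p" and "h \<ge> 1" "p^h > 4" and pn: "p^(h+t) dvd n" and "n > 0"
  shows "Mfun (p^h) (U n) \<ge> ln (cmod ((a^n - b^n) / (a^(n div p^(t+1)) - b^(n div p^(t+1)))))
                            - real (t+1) * ln (real p)"
proof -
  define m where "m = n div p^(t+1)"
  have "p^(t+1) dvd n"
    using \<open>h \<ge> 1\<close> by (intro dvd_trans[OF le_imp_power_dvd pn]) simp
  then have "m > 0"
    using \<open>n > 0\<close> by (auto simp: m_def div_greater_zero_iff dvd_imp_le)
  have "ln (cmod ((a^n - b^n) / (a^m - b^m))) = ln \<bar>real_of_int (U n)\<bar> - ln \<bar>real_of_int (U m)\<bar>"
    using U_nonzero \<open>n > 0\<close> \<open>m > 0\<close> by (simp add: cmod_U_ratio ln_div)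
  also have "\<dots> \<le> Mfun (p^h) (U n) + real (t+1) * ln (real p)"
    using U_nonzero \<open>n > 0\<close> \<open>m > 0\<close> p prime_gt_0_nat
      multiplicity_U_div_prime_power_le[OF p \<open>h \<ge> 1\<close> \<open>p^h > 4\<close> pn \<open>n > 0\<close>]
    by (intro ln_ratio_le_Mfun) (simp_all add: m_def)
  finally show ?thesis
    by (simp add: m_def)
qed

lemma Mfun_V_ge_prime_power:
  assumes p: "prime p" "odd p" and "h \<ge> 1" "p^h > 4" and pn: "p^(h+t) dvd n" and "n > 0"
  shows "Mfun (p^h) (V n) \<ge> ln (cmod ((a^n + b^n) / (a^(n div p^(t+1)) + b^(n div p^(t+1)))))
                            - real (t+1) * ln (real p)"
proof -
  have "ln (cmod ((a^n + b^n) / (a^(n div p^(t+1)) + b^(n div p^(t+1)))))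
          = ln \<bar>real_of_int (V n)\<bar> - ln \<bar>real_of_int (V (n div p^(t+1)))\<bar>"
    using V_nonzero by (simp add: cmod_V_ratio ln_div)
  also have "\<dots> \<le> Mfun (p^h) (V n) + real (t+1) * ln (real p)"
    using V_nonzero p prime_gt_0_nat
      multiplicity_V_div_prime_power_le[OF p \<open>h \<ge> 1\<close> \<open>p^h > 4\<close> pn \<open>n > 0\<close>]
    by (intro ln_ratio_le_Mfun) simp_all
  finally show ?thesis
    by simp
qed

context
  fixes p p1 h h1 n0 t n :: nat
  assumes p: "prime p" and p1: "prime p1" "p < p1" and h: "h \<ge> 1" "h1 \<ge> 1"
    and n0: "n0 = p^h * p1^h1" "n0 > 4" "n0 \<notin> {6, 12}" and nd: "n0 * p^t dvd n" "n > 0"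
begin

lemma two_primes_quotients:
  shows "n = n div (p1 * p^(t+1)) * p1 * p^(t+1)" "n div (p1 * p^(t+1)) > 0"
    and "n div p^(t+1) = n div (p1 * p^(t+1)) * p1" "n div p1 = n div (p1 * p^(t+1)) * p^(t+1)"
    and "p^(h+t) dvd n div p1" "p^(h+t) dvd n" "p1^h1 dvd n"
proof -
  have pn: "p^(h+t) dvd n" and "p1^h1 dvd n" and "p1 * p^(t+1) dvd n"
    using dvd_of_two_prime_powers_dvd[OF p p1(1) _ h] nd(1) n0(1) p1(2) by simp_all
  then show "p^(h+t) dvd n" "p1^h1 dvd n"
    by simp_all
  from \<open>p1 * p^(t+1) dvd n\<close> show n: "n = n div (p1 * p^(t+1)) * p1 * p^(t+1)"
    by (simp add: mult.assoc)
  then show "n div (p1 * p^(t+1)) > 0"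
    using nd(2) by (metis gr0I mult_is_0)
  show "n div p^(t+1) = n div (p1 * p^(t+1)) * p1" "n div p1 = n div (p1 * p^(t+1)) * p^(t+1)"
    using p p1 by (subst (1 2) n; simp add: prime_gt_0_nat mult_ac)+
  have "coprime (p^(h+t)) p1"
    using primes_coprime[OF p p1(1)] p1(2) by simp
  moreover have "p^(h+t) dvd (n div p1) * p1"
    using pn p1 prime_gt_0_nat \<open>p1 * p^(t+1) dvd n\<close> by (metis dvd_div_mult_self dvd_mult_left)
  ultimately show "p^(h+t) dvd n div p1"
    using coprime_dvd_mult_left_iff by blast
qed

lemma two_primes_exceptional:
  assumes "p1 = 3" "h1 = 1"
  shows "p = 2 \<and> 2^h > (4::nat)"
proof -
  have "p = 2"
    using p p1 assms prime_ge_2_nat[of p] by simp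
  moreover have "h \<noteq> 1" "h \<noteq> 2"
    using n0 assms \<open>p = 2\<close> by auto
  then have "(2::nat)^3 \<le> 2^h"
    using h by (intro power_increasing) simp_all
  ultimately show ?thesis
    by simp
qed

lemma multiplicity_U_two_primes_le_of_dvd:
  assumes q: "prime q" and qn': "q dvd U (n div p1)"
  shows "int (multiplicity q (U n)) - int (multiplicity q (U (n div p^(t+1))))
           - int (multiplicity q (U (n div p1))) + int (multiplicity q (U (n div (p1 * p^(t+1)))))
         \<le> (if q = int p1 \<and> \<not> (p1 = 3 \<and> h1 = 1) then 1 else 0)"
proof -
  define d where "d = p^(t+1)"
  define k where "k = n div (p1 * d)"
  note quotients = two_primes_quotients[folded d_def, folded k_def]
  have "odd p1"
    using p p1 prime_ge_2_nat[of p] prime_odd_nat[of p1] by simp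
  have "n div p1 dvd n"
    using quotients(1,4) by (metis dvd_triv_left mult.assoc mult.commute)
  then have "q dvd U n"
    using qn' U_dvd_U dvd_trans by blast
  (* For n0 = 3 * 2^h with h \<ge> 3 the rank of 3 would be a multiple of 8, but it is at most 4. *)
  have "\<not> (q = int p1 \<and> \<not> q dvd U k \<and> p1 = 3 \<and> h1 = 1)"
  proof
    assume *: "q = int p1 \<and> \<not> q dvd U k \<and> p1 = 3 \<and> h1 = 1"
    then have "p = 2" "2^h > (4::nat)"
      using two_primes_exceptional by simp_all
    moreover have "rank q dvd k*d" "\<not> rank q dvd k"
      using prime_dvd_U_iff_rank_dvd[OF q nd(2) \<open>q dvd U n\<close>] qn' * quotients(4) by auto
    ultimately have "2^h dvd rank q"
      using dvd_div_prime_power_of_not_dvd[of 2 h t "k*d" "rank q"] h quotients(2,4,5)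
      by (auto simp: d_def)
    then show False
      using dvd_rank_le_succ[OF q nd(2) \<open>q dvd U n\<close>] * \<open>2^h > 4\<close> by fastforce
  qed
  then have "(if q = int p1 \<and> \<not> q dvd U k then 1 else 0)
               \<le> (if q = int p1 \<and> \<not> (p1 = 3 \<and> h1 = 1) then 1 else (0::int))"
    by auto
  moreover have "d > 0"
    using p by (simp add: d_def prime_gt_0_nat)
  moreover have "n div p^(t+1) = k*p1" "n div p1 = k*d" "n div (p1 * p^(t+1)) = k"
    using quotients(3,4) by (simp_all add: d_def k_def)
  ultimately show ?thesis
    using multiplicity_U_mult_odd_prime_le[OF p1(1) \<open>odd p1\<close> q quotients(2) \<open>d > 0\<close>] qn' quotients(1,4)
    by (simp only:) simp
qed

lemma multiplicity_U_two_primes_le_of_not_dvd: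
  assumes q: "prime q" and bad: "\<not> cong_pm_one n0 q"
    and qn: "q dvd U n" and qn': "\<not> q dvd U (n div p1)"
  shows "int (multiplicity q (U n)) - int (multiplicity q (U (n div p^(t+1))))
           - int (multiplicity q (U (n div p1))) + int (multiplicity q (U (n div (p1 * p^(t+1)))))
         \<le> (if q = int p \<and> p1 = 3 \<and> h1 = 1 then int (t+1) else 0)"
proof -
  define k where "k = n div (p1 * p^(t+1))"
  note quotients = two_primes_quotients[folded k_def]
  note rank_dvd = prime_dvd_U_iff_rank_dvd[OF q nd(2) qn]
  have "\<not> q dvd U k"
    using qn' U_dvd_U[of k "n div p1"] quotients(4) dvd_trans by auto
  then have zero: "multiplicity q (U (n div p1)) = 0" "multiplicity q (U k) = 0"
    using qn' by (simp_all add: not_dvd_imp_multiplicity_0)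
  have "rank q dvd n"
    using rank_dvd qn by blast
  have "p1^h1 dvd rank q"
    using dvd_div_prime_power_of_not_dvd[OF p1(1) h(2), of 0 n "rank q"] rank_dvd qn' \<open>rank q dvd n\<close>
      quotients(7) nd(2) by auto
  show ?thesis
  proof (cases "q dvd U (n div p^(t+1))")
    case True
    have exceptional: "p = 2 \<and> p1 = 3 \<and> h1 = 1" if "q = int p"
      using prime_power_dvd_rank_of_smaller_prime[OF q nd(2) qn p that p1 h(2)] \<open>p1^h1 dvd rank q\<close> .
    then have "q = int p \<Longrightarrow> even (n div p^(t+1))"
      using two_primes_exceptional even_div_two_power[of h t n] quotients(6) by auto
    then have "multiplicity q (U n) = multiplicity q (U (n div p^(t+1))) + (if q = int p then t+1 else 0)"
      using multiplicity_U_mult_prime_power[OF p q _ True, of "t+1"] quotients p1 prime_gt_0_nat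
      by (metis (no_types, lifting) mult_pos_pos)
    then show ?thesis
      using zero exceptional by (auto simp: k_def)
  next
    case False
    then have "p^h dvd rank q"
      using dvd_div_prime_power_of_not_dvd[OF p h(1) quotients(6) nd(2) \<open>rank q dvd n\<close>] rank_dvd by auto
    then have "n0 dvd rank q"
      using \<open>p1^h1 dvd rank q\<close> primes_coprime[OF p p1(1)] p1(2) n0(1)
      by (simp add: divides_mult coprime_power_left_iff coprime_power_right_iff)
    then have "prime n0"
      using rank_of_bad_prime[OF q nd(2) qn _ _ bad] n0(2) q by auto
    moreover have "p^h > 1" "p1^h1 > 1"
      using one_less_power[OF prime_gt_1_nat[OF p], of h] one_less_power[OF prime_gt_1_nat[OF p1(1)], of h1] h
      by simp_all
    ultimately show ?thesis
      using n0(1) prime_product[of "p^h" "p1^h1"] by auto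
  qed
qed

lemma multiplicity_U_div_two_primes_le:
  assumes q: "prime q" and bad: "\<not> cong_pm_one n0 q"
  shows "int (multiplicity q (U n)) - int (multiplicity q (U (n div p^(t+1))))
           - int (multiplicity q (U (n div p1))) + int (multiplicity q (U (n div (p1 * p^(t+1)))))
         \<le> (if q = int (if p1 = 3 \<and> h1 = 1 then p else p1) then int (t+1) else 0)"
    (is "?\<Delta> \<le> ?bound")
proof -
  consider "\<not> q dvd U n" | "q dvd U (n div p1)" | "q dvd U n" "\<not> q dvd U (n div p1)"
    by blast
  then show ?thesis
  proof cases
    case 1
    note quotients = two_primes_quotients
    have "multiplicity q (U (n div (p1 * p^(t+1)))) \<le> multiplicity q (U (n div p^(t+1)))"
      using U_dvd_U[of "n div (p1 * p^(t+1))" "n div p^(t+1)"] U_nonzero[of "n div p^(t+1)"] quotients p1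
        prime_gt_0_nat by (intro dvd_imp_multiplicity_le) auto
    moreover have "0 \<le> ?bound"
      by simp
    ultimately show ?thesis
      using 1 by (simp add: not_dvd_imp_multiplicity_0)
  next
    case 2
    have "(if q = int p1 \<and> \<not> (p1 = 3 \<and> h1 = 1) then 1 else 0) \<le> ?bound"
      by (cases "p1 = 3 \<and> h1 = 1") auto
    then show ?thesis
      using multiplicity_U_two_primes_le_of_dvd[OF q 2] by linarith
  next
    case 3
    have "(if q = int p \<and> p1 = 3 \<and> h1 = 1 then int (t+1) else 0) \<le> ?bound"
      by (cases "p1 = 3 \<and> h1 = 1") auto
    then show ?thesis
      using multiplicity_U_two_primes_le_of_not_dvd[OF q bad 3] by linarith
  qed
qed

lemma Mfun_U_ge_two_prime_powers:
  shows "Mfun n0 (U n) \<ge> ln (cmod ((a^n - b^n) / (a^(n div p^(t+1)) - b^(n div p^(t+1))))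
                             * cmod ((a^(n div (p1 * p^(t+1))) - b^(n div (p1 * p^(t+1))))
                                     / (a^(n div p1) - b^(n div p1))))
                        - real (t+1) * ln (real (Pmax (n0 div gcd n0 3)))"
proof -
  define m where "m = n div p^(t+1)"
  define m' where "m' = n div (p1 * p^(t+1))"
  define n' where "n' = n div p1"
  have "p1 * p^(t+1) dvd n"
    using dvd_of_two_prime_powers_dvd[OF p p1(1) _ h] nd(1) n0(1) p1(2) by simp
  then have "n = m' * p1 * p^(t+1)"
    by (simp add: m'_def mult.assoc)
  then have quotients: "m = m' * p1" "n' = m' * p^(t+1)"
    using p p1 by (simp_all add: m_def n'_def prime_gt_0_nat)
  have "m' > 0"
    using \<open>n = m' * p1 * p^(t+1)\<close> \<open>n > 0\<close> by (cases m') auto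
  then have "m > 0" "n' > 0"
    using p p1 by (simp_all add: quotients prime_gt_0_nat)
  have nonzero: "U n \<noteq> 0" "U m \<noteq> 0" "U m' \<noteq> 0" "U n' \<noteq> 0"
    using U_nonzero \<open>n > 0\<close> \<open>m > 0\<close> \<open>m' > 0\<close> \<open>n' > 0\<close> by simp_all
  have mult: "multiplicity q (U k * U l) = multiplicity q (U k) + multiplicity q (U l)"
    if "prime q" "U k \<noteq> 0" "U l \<noteq> 0" for q k l
    using that by (intro prime_elem_multiplicity_mult_distrib) auto
  define P0 where "P0 = (if p1 = 3 \<and> h1 = 1 then p else p1)"
  define x where "x = U n * U m'"
  define y where "y = U m * U n'"
  have "ln (cmod ((a^n - b^n) / (a^m - b^m)) * cmod ((a^m' - b^m') / (a^n' - b^n')))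
          = ln \<bar>real_of_int x\<bar> - ln \<bar>real_of_int y\<bar>"
    using nonzero \<open>m > 0\<close> \<open>n' > 0\<close> by (simp add: x_def y_def cmod_U_ratio abs_mult ln_mult ln_div)
  also have "\<dots> \<le> Mfun n0 (U n) + real (t+1) * ln (real P0)"
  proof (rule ln_ratio_le_Mfun)
    show "x \<noteq> 0" "y \<noteq> 0" "U n \<noteq> 0" "P0 > 0"
      using nonzero p p1 by (simp_all add: x_def y_def P0_def prime_gt_0_nat)
  next
    fix q :: int assume "prime q"
    then have vx: "multiplicity q x = multiplicity q (U n) + multiplicity q (U m')"
      and vy: "multiplicity q y = multiplicity q (U m) + multiplicity q (U n')"
      unfolding x_def y_def using nonzero by (auto intro!: prime_elem_multiplicity_mult_distrib)
    have "multiplicity q (U m') \<le> multiplicity q (U m)"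
      using U_dvd_U[of m' m] nonzero by (intro dvd_imp_multiplicity_le) (simp_all add: quotients)
    then show "int (multiplicity q x) - int (multiplicity q y) \<le> int (multiplicity q (U n))"
      by (simp add: vx vy)
    assume "\<not> cong_pm_one n0 q"
    then show "int (multiplicity q x) - int (multiplicity q y) \<le> (if q = int P0 then int (t+1) else 0)"
      using multiplicity_U_div_two_primes_le[OF \<open>prime q\<close>]
      by (simp add: vx vy P0_def m_def m'_def n'_def)
  qed
  finally show ?thesis
    using Pmax_two_prime_powers[OF p p1 h] by (simp add: n0(1) P0_def m_def m'_def n'_def)
qed

end

end

theorem lemma1:
  fixes r s :: int and \<alpha> \<beta> :: complex and U V :: "nat \<Rightarrow> int"
    and n n0 p p1 t h h1 :: nat
  assumes "coprime r s" and "r \<noteq> (0::int)" and "s \<noteq> (0::int)" and "r^2 + 4 * s \<noteq> 0"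
    and roots: "\<forall>x::complex. x^2 - of_int r * x - of_int s = (x - \<alpha>) * (x - \<beta>)"
    and "cmod \<alpha> \<ge> cmod \<beta>"
    and "\<forall>k::nat. k > 0 \<longrightarrow> (\<alpha> / \<beta>) ^ k \<noteq> 1"
    and U_def: "\<forall>m. complex_of_int (U m) = (\<alpha>^m - \<beta>^m) / (\<alpha> - \<beta>)"
    and V_def: "\<forall>m. complex_of_int (V m) = \<alpha>^m + \<beta>^m"
    and "n > 0" and "prime p" and "prime p1" and "p < p1" and "h \<ge> 1" and "h1 \<ge> 1"
    and "n0 = p^h \<or> n0 = p^h * p1^h1" and "n0 > 4" and "n0 \<notin> {6, 12}"
    and "n0 * p^t dvd n"
  shows
    "(n0 = p^h \<longrightarrow>
        Mfun n0 (U n) \<ge> ln (cmod ((\<alpha>^n - \<beta>^n) / (\<alpha>^(n div p^(t+1)) - \<beta>^(n div p^(t+1)))))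
                         - real (t+1) * ln (real p)) \<and>
     (n0 = p^h * p1^h1 \<longrightarrow>
        Mfun n0 (U n) \<ge> ln (cmod ((\<alpha>^n - \<beta>^n) / (\<alpha>^(n div p^(t+1)) - \<beta>^(n div p^(t+1))))
                            * cmod ((\<alpha>^(n div (p1 * p^(t+1))) - \<beta>^(n div (p1 * p^(t+1))))
                                    / (\<alpha>^(n div p1) - \<beta>^(n div p1))))
                         - real (t+1) * ln (real (Pmax (n0 div gcd n0 3)))) \<and>
     (n0 = p^h \<and> p > 2 \<longrightarrow>
        Mfun n0 (V n) \<ge> ln (cmod ((\<alpha>^n + \<beta>^n) / (\<alpha>^(n div p^(t+1)) + \<beta>^(n div p^(t+1)))))
                         - real (t+1) * ln (real p))"
proof -
  have "\<alpha> * \<beta> = - of_int s"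
    using roots[rule_format, of 0] by simp
  moreover have "\<alpha> + \<beta> = of_int r"
    using roots[rule_format, of 1] \<open>\<alpha> * \<beta> = - of_int s\<close> by (simp add: algebra_simps)
  ultimately interpret lucas r s \<alpha> \<beta> U V
    using assms by unfold_locales auto
  have "n0 = p^h \<Longrightarrow> p^(h+t) dvd n"
    using \<open>n0 * p^t dvd n\<close> by (simp add: power_add)
  then show ?thesis
    using Mfun_U_ge_prime_power Mfun_V_ge_prime_power[of p h t n] Mfun_U_ge_two_prime_powers assms
      prime_odd_nat[of p]
    by auto
qed

end
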